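(* Let $A=\{a_1,\ldots,a_n\}$ and $B=\{b_1,\ldots,b_m\}$ be finite point sets in $\mathbb{R}^2$ with $m\le n$. Let $t\in\mathbb{R}^2$ be such that $\|b_p+t-a_r\|\neq\|b_p+t-a_s\|$ for all $p\in\{1,\ldots,m\}$ and all $r\ne s$ in $\{1,\ldots,n\}$, and let $\pi$ be an optimal matching for $t$. Then: (i) there is no cyclic sequence $(i_1,i_2,\ldots,i_k,i_1)$ of indices in $\{1,\ldots,m\}$ satisfying $\|b_{i_j}+t-a_{\pi(i_j)}\|>\|b_{i_j}+t-a_{\pi(i_{j+1})}\|$ for all $j\in\{1,\ldots,k\}$ (indices modulo $k$); (ii) each point of $B+t$ is matched by $\pi$ to one of its $m$ nearest neighbors in $A$; (iii) at least one point of $B+t$ is matched by $\pi$ to its nearest neighbor in $A$; (iv) there exists an ordering $(b_{i_1},\ldots,b_{i_m})$ of the elements of $B$ such that, for $k=1,\ldots,m$, $b_{i_k}+t$ is assigned by $\pi$ to its nearest neighbor in $A\setminus\{a_{\pi(i_1)},\ldots,a_{\pi(i_{k-1})}\}$; in particular, $b_{i_k}+t$ is assigned to one of its $k$ nearest neighbors in $A$.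
   Context: A matching is an injective map $\pi:B\to A$, writing $a_{\pi(i)}$ for the point assigned to $b_i$. Its cost at translation $t$ is $f(\pi,t)=\sum_{i=1}^m\|b_i+t-a_{\pi(i)}\|^2$. A matching $\pi$ is optimal for $t$ if it minimizes $f(\cdot,t)$ over all injective maps $B\to A$. *)

theory Defs
  imports "HOL-Analysis.Analysis"
begin

text \<open>Points a_1..a_n are a 0, ..., a (n-1); points b_1..b_m are b 0, ..., b (m-1).
  A matching is an injective map from indices of B to indices of A.\<close>

definition is_matching :: "nat \<Rightarrow> nat \<Rightarrow> (nat \<Rightarrow> nat) \<Rightarrow> bool" where
  "is_matching n m \<pi> \<longleftrightarrow> (\<forall>i<m. \<pi> i < n) \<and> inj_on \<pi> {..<m}"

definition match_cost :: "(nat \<Rightarrow> real^2) \<Rightarrow> (nat \<Rightarrow> real^2) \<Rightarrow> nat \<Rightarrow> (nat \<Rightarrow> nat) \<Rightarrow> real^2 \<Rightarrow> real" where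
  "match_cost a b m \<pi> t = (\<Sum>i<m. (norm (b i + t - a (\<pi> i)))\<^sup>2)"

definition optimal_matching ::
  "(nat \<Rightarrow> real^2) \<Rightarrow> (nat \<Rightarrow> real^2) \<Rightarrow> nat \<Rightarrow> nat \<Rightarrow> real^2 \<Rightarrow> (nat \<Rightarrow> nat) \<Rightarrow> bool" where
  "optimal_matching a b n m t \<pi> \<longleftrightarrow> is_matching n m \<pi> \<and>
     (\<forall>\<sigma>. is_matching n m \<sigma> \<longrightarrow> match_cost a b m \<pi> t \<le> match_cost a b m \<sigma> t)"

definition is_nearest :: "(nat \<Rightarrow> real^2) \<Rightarrow> nat set \<Rightarrow> real^2 \<Rightarrow> nat \<Rightarrow> bool" where
  "is_nearest a I x r \<longleftrightarrow> r \<in> I \<and> (\<forall>s\<in>I. norm (x - a r) \<le> norm (x - a s))"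

definition among_k_nearest :: "(nat \<Rightarrow> real^2) \<Rightarrow> nat set \<Rightarrow> real^2 \<Rightarrow> nat \<Rightarrow> nat \<Rightarrow> bool" where
  "among_k_nearest a I x k r \<longleftrightarrow> r \<in> I \<and> card {s\<in>I. norm (x - a s) < norm (x - a r)} < k"

end

theory Submission
  imports Defs
begin

text \<open>If some points of \<open>B + t\<close> each strictly prefer the partner of another point of the
  same group, following these preferences from any point eventually runs around a cycle, and
  rotating the partners along that cycle strictly lowers the cost. Hence no such group exists
  for an optimal matching (this is (i)), and no point prefers an unused point of \<open>A\<close>.
  Consequently, among the points not yet ordered, one is always matched to its nearest
  neighbour among the points of \<open>A\<close> not yet used; picking these greedily gives the
  ordering (iv), from which (ii) and (iii) follow.\<close>

definition envies :: "(nat \<Rightarrow> real^2) \<Rightarrow> (nat \<Rightarrow> real^2) \<Rightarrow> real^2 \<Rightarrow> (nat \<Rightarrow> nat) \<Rightarrow> nat \<Rightarrow> nat \<Rightarrow> bool" where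
  "envies a b t \<pi> i j \<longleftrightarrow> norm (b i + t - a (\<pi> j)) < norm (b i + t - a (\<pi> i))"

lemma finite_selfmap_has_invariant_subset:
  assumes "finite R" "R \<noteq> {}" "f ` R \<subseteq> R"
  shows "\<exists>C\<subseteq>R. C \<noteq> {} \<and> f ` C = C"
  using assms
proof (induction "card R" arbitrary: R rule: less_induct)
  case less
  show ?case
  proof (cases "f ` R = R")
    case True
    then show ?thesis
      using less.prems(2) by (intro exI[of _ R]) simp
  next
    case False
    with less.prems have "f ` R \<subset> R" by blast
    with less.prems(1) have "card (f ` R) < card R" by (simp add: psubset_card_mono)
    moreover have "finite (f ` R)" "f ` R \<noteq> {}" "f ` f ` R \<subseteq> f ` R"
      using less.prems by auto
    ultimately have "\<exists>C\<subseteq>f ` R. C \<noteq> {} \<and> f ` C = C"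
      by (rule less.hyps)
    then obtain C where "C \<subseteq> f ` R" "C \<noteq> {}" "f ` C = C"
      by blast
    with \<open>f ` R \<subset> R\<close> show ?thesis
      by (intro exI[of _ C]) auto
  qed
qed

lemma is_matching_comp:
  assumes "is_matching n m \<pi>" "inj_on g {..<m}" "g ` {..<m} \<subseteq> {..<m}"
  shows "is_matching n m (\<pi> \<circ> g)"
  using assms by (auto simp: is_matching_def intro: comp_inj_on inj_on_subset)

lemma is_matching_update:
  assumes "is_matching n m \<pi>" "s < n" "s \<notin> \<pi> ` {..<m}"
  shows "is_matching n m (\<pi>(i := s))"
  using assms by (auto simp: is_matching_def inj_on_def)

lemma match_cost_strict_mono:
  assumes "\<forall>i<m. norm (b i + t - a (\<sigma> i)) \<le> norm (b i + t - a (\<pi> i))"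
    and "i < m" "norm (b i + t - a (\<sigma> i)) < norm (b i + t - a (\<pi> i))"
  shows "match_cost a b m \<sigma> t < match_cost a b m \<pi> t"
  unfolding match_cost_def
proof (rule sum_strict_mono_ex1)
  show "\<forall>j\<in>{..<m}. (norm (b j + t - a (\<sigma> j)))\<^sup>2 \<le> (norm (b j + t - a (\<pi> j)))\<^sup>2"
    using assms(1) by (auto intro: power_mono)
  show "\<exists>j\<in>{..<m}. (norm (b j + t - a (\<sigma> j)))\<^sup>2 < (norm (b j + t - a (\<pi> j)))\<^sup>2"
    using assms(2,3) by (auto intro!: bexI[of _ i] power_strict_mono)
qed simp

lemma optimal_matching_not_improvable:
  assumes "optimal_matching a b n m t \<pi>" "is_matching n m \<sigma>"
    and "\<forall>i<m. norm (b i + t - a (\<sigma> i)) \<le> norm (b i + t - a (\<pi> i))"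
    and "i < m" "norm (b i + t - a (\<sigma> i)) < norm (b i + t - a (\<pi> i))"
  shows False
  using match_cost_strict_mono[OF assms(3-5)] assms(1,2)
  by (auto simp: optimal_matching_def not_less[symmetric])

lemma optimal_matching_no_envy_permutation:
  assumes opt: "optimal_matching a b n m t \<pi>"
    and C: "C \<subseteq> {..<m}" "C \<noteq> {}" "f ` C = C"
    and envy: "\<forall>i\<in>C. envies a b t \<pi> i (f i)"
  shows False
proof -
  define g where "g i = (if i \<in> C then f i else i)" for i
  have "inj_on f C"
    using C by (simp add: finite_surj_inj finite_subset)
  then have "inj_on g {..<m}"
    using C(3) by (auto simp: g_def inj_on_def)
  moreover have "g ` {..<m} \<subseteq> {..<m}"
    using C by (auto simp: g_def)
  ultimately have "is_matching n m (\<pi> \<circ> g)"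
    using opt is_matching_comp by (auto simp: optimal_matching_def)
  moreover have "\<forall>i<m. norm (b i + t - a ((\<pi> \<circ> g) i)) \<le> norm (b i + t - a (\<pi> i))"
    using envy by (auto simp: g_def envies_def less_imp_le)
  moreover obtain c where "c \<in> C"
    using C(2) by blast
  moreover have "norm (b c + t - a ((\<pi> \<circ> g) c)) < norm (b c + t - a (\<pi> c))"
    using envy \<open>c \<in> C\<close> by (simp add: g_def envies_def)
  ultimately show False
    using C(1) optimal_matching_not_improvable[OF opt] by blast
qed

lemma optimal_matching_no_envy_of_unused:
  assumes opt: "optimal_matching a b n m t \<pi>"
    and "i < m" "s < n" "s \<notin> \<pi> ` {..<m}"
    and "norm (b i + t - a s) < norm (b i + t - a (\<pi> i))"
  shows False
proof (rule optimal_matching_not_improvable[OF opt _ _ \<open>i < m\<close>])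
  show "is_matching n m (\<pi>(i := s))"
    using assms(1,3,4) by (intro is_matching_update) (auto simp: optimal_matching_def)
qed (use assms(5) in auto)

lemma optimal_matching_no_envy_closed_set:
  assumes opt: "optimal_matching a b n m t \<pi>" and R: "R \<subseteq> {..<m}" "R \<noteq> {}"
    and envy: "\<forall>i\<in>R. \<exists>j\<in>R. envies a b t \<pi> i j"
  shows False
proof -
  obtain f where f: "\<forall>i\<in>R. f i \<in> R \<and> envies a b t \<pi> i (f i)"
    using envy by metis
  have "finite R"
    using R(1) finite_subset by blast
  moreover have "f ` R \<subseteq> R"
    using f by blast
  ultimately obtain C where "C \<subseteq> R" "C \<noteq> {}" "f ` C = C"
    using finite_selfmap_has_invariant_subset R(2) by metis
  with f R(1) show False
    by (intro optimal_matching_no_envy_permutation[OF opt, of C f]) auto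
qed

lemma optimal_matching_no_envy_cycle:
  fixes k :: nat and i :: "nat \<Rightarrow> nat"
  assumes opt: "optimal_matching a b n m t \<pi>"
    and i: "k \<ge> 1" "\<forall>j<k. i j < m"
    and cycle: "\<forall>j<k. envies a b t \<pi> (i j) (i ((j + 1) mod k))"
  shows False
proof -
  have "\<exists>y\<in>i ` {..<k}. envies a b t \<pi> x y" if x: "x \<in> i ` {..<k}" for x
  proof -
    obtain j where "j < k" "x = i j"
      using x by blast
    moreover have "(j + 1) mod k < k"
      using i(1) by simp
    ultimately show ?thesis
      using cycle by blast
  qed
  moreover have "i ` {..<k} \<subseteq> {..<m}" "i ` {..<k} \<noteq> {}"
    using i by (auto simp: lessThan_empty_iff)
  ultimately show False
    using optimal_matching_no_envy_closed_set[OF opt] by blast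
qed

lemma optimal_matching_greedy_step:
  assumes opt: "optimal_matching a b n m t \<pi>" and D: "D \<subseteq> {..<m}" "D \<noteq> {..<m}"
  shows "\<exists>i\<in>{..<m} - D. is_nearest a ({..<n} - \<pi> ` D) (b i + t) (\<pi> i)"
proof (rule ccontr)
  assume no_nearest: "\<not> ?thesis"
  have \<pi>: "\<And>i. i < m \<Longrightarrow> \<pi> i < n" "inj_on \<pi> {..<m}"
    using opt by (auto simp: optimal_matching_def is_matching_def)
  have "\<exists>j\<in>{..<m} - D. envies a b t \<pi> i j" if i: "i \<in> {..<m} - D" for i
  proof -
    have "\<pi> i \<in> {..<n} - \<pi> ` D"
      using i D(1) \<pi> by (auto dest: inj_onD)
    moreover have "\<not> is_nearest a ({..<n} - \<pi> ` D) (b i + t) (\<pi> i)"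
      using no_nearest i by blast
    ultimately obtain s where s: "s \<in> {..<n} - \<pi> ` D"
      "norm (b i + t - a s) < norm (b i + t - a (\<pi> i))"
      unfolding is_nearest_def by (auto simp: not_le)
    have "s \<in> \<pi> ` {..<m}"
      using optimal_matching_no_envy_of_unused[OF opt] i s by auto
    then obtain j where "j < m" "s = \<pi> j"
      by blast
    with s show ?thesis
      by (auto simp: envies_def)
  qed
  moreover have "{..<m} - D \<noteq> {}"
    using D by blast
  ultimately show False
    using optimal_matching_no_envy_closed_set[OF opt Diff_subset] by blast
qed

lemma optimal_matching_greedy_order:
  assumes opt: "optimal_matching a b n m t \<pi>" and "k \<le> m"
  shows "\<exists>\<sigma>. inj_on \<sigma> {..<k} \<and> \<sigma> ` {..<k} \<subseteq> {..<m} \<and>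
     (\<forall>j<k. is_nearest a ({..<n} - \<pi> ` \<sigma> ` {..<j}) (b (\<sigma> j) + t) (\<pi> (\<sigma> j)))"
  using \<open>k \<le> m\<close>
proof (induction k)
  case 0
  then show ?case by auto
next
  case (Suc k)
  then obtain \<sigma> where \<sigma>: "inj_on \<sigma> {..<k}" "\<sigma> ` {..<k} \<subseteq> {..<m}"
    "\<forall>j<k. is_nearest a ({..<n} - \<pi> ` \<sigma> ` {..<j}) (b (\<sigma> j) + t) (\<pi> (\<sigma> j))"
    by auto
  have "card (\<sigma> ` {..<k}) = k"
    using \<sigma>(1) by (simp add: card_image)
  then have "\<sigma> ` {..<k} \<noteq> {..<m}"
    using Suc.prems by auto
  then obtain i where i: "i \<in> {..<m} - \<sigma> ` {..<k}"
    "is_nearest a ({..<n} - \<pi> ` \<sigma> ` {..<k}) (b i + t) (\<pi> i)"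
    using optimal_matching_greedy_step[OF opt \<sigma>(2)] by blast
  have prefix: "\<sigma>(k := i) ` {..<j} = \<sigma> ` {..<j}" if "j \<le> k" for j
    using that by auto
  show ?case
  proof (intro exI[of _ "\<sigma>(k := i)"] conjI allI impI)
    show "inj_on (\<sigma>(k := i)) {..<Suc k}"
      unfolding lessThan_Suc using \<sigma>(1) i(1) prefix[of k] by (auto simp: inj_on_def)
    show "\<sigma>(k := i) ` {..<Suc k} \<subseteq> {..<m}"
      unfolding lessThan_Suc using \<sigma>(2) i(1) prefix[of k] by auto
    fix j assume "j < Suc k"
    then show "is_nearest a ({..<n} - \<pi> ` (\<sigma>(k := i)) ` {..<j}) (b ((\<sigma>(k := i)) j) + t)
        (\<pi> ((\<sigma>(k := i)) j))"
      using prefix[of j] i(2) \<sigma>(3) by (cases "j = k") auto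
  qed
qed

lemma is_nearest_Diff_imp_among_k_nearest:
  assumes "is_nearest a (I - X) x r" "finite X" "card X \<le> k"
  shows "among_k_nearest a I x (k + 1) r"
proof -
  have "{s\<in>I. norm (x - a s) < norm (x - a r)} \<subseteq> X"
    using assms(1) by (force simp: is_nearest_def)
  then have "card {s\<in>I. norm (x - a s) < norm (x - a r)} \<le> k"
    using assms(2,3) card_mono le_trans by blast
  then show ?thesis
    using assms(1) by (simp add: among_k_nearest_def is_nearest_def)
qed

lemma among_k_nearest_mono:
  "among_k_nearest a I x k r \<Longrightarrow> k \<le> l \<Longrightarrow> among_k_nearest a I x l r"
  by (auto simp: among_k_nearest_def)

lemma optimal_matching_greedy_permutation:
  assumes opt: "optimal_matching a b n m t \<pi>"
  obtains \<sigma> where "bij_betw \<sigma> {..<m} {..<m}"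
    "\<forall>k<m. is_nearest a ({..<n} - \<pi> ` \<sigma> ` {..<k}) (b (\<sigma> k) + t) (\<pi> (\<sigma> k))"
    "\<forall>k<m. among_k_nearest a {..<n} (b (\<sigma> k) + t) (k + 1) (\<pi> (\<sigma> k))"
proof -
  obtain \<sigma> where \<sigma>: "inj_on \<sigma> {..<m}" "\<sigma> ` {..<m} \<subseteq> {..<m}"
    and greedy: "\<forall>k<m. is_nearest a ({..<n} - \<pi> ` \<sigma> ` {..<k}) (b (\<sigma> k) + t) (\<pi> (\<sigma> k))"
    using optimal_matching_greedy_order[OF opt order_refl] by blast
  have "bij_betw \<sigma> {..<m} {..<m}"
    using \<sigma> by (simp add: bij_betw_def card_image card_subset_eq)
  moreover have "among_k_nearest a {..<n} (b (\<sigma> k) + t) (k + 1) (\<pi> (\<sigma> k))" if "k < m" for k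
  proof (rule is_nearest_Diff_imp_among_k_nearest)
    show "is_nearest a ({..<n} - \<pi> ` \<sigma> ` {..<k}) (b (\<sigma> k) + t) (\<pi> (\<sigma> k))"
      using greedy that by blast
    have "card (\<pi> ` \<sigma> ` {..<k}) \<le> card (\<sigma> ` {..<k})"
      by (simp add: card_image_le)
    also have "\<dots> \<le> k"
      using card_image_le[of "{..<k}" \<sigma>] by simp
    finally show "card (\<pi> ` \<sigma> ` {..<k}) \<le> k" .
  qed simp
  ultimately show ?thesis
    using that greedy by blast
qed

theorem lemma4:
  fixes a b :: "nat \<Rightarrow> real^2" and n m :: nat and t :: "real^2" and \<pi> :: "nat \<Rightarrow> nat"
  assumes "1 \<le> m" and "m \<le> n"
    and "inj_on a {..<n}" and "inj_on b {..<m}"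
    and gen: "\<And>p r s. p < m \<Longrightarrow> r < n \<Longrightarrow> s < n \<Longrightarrow> r \<noteq> s \<Longrightarrow>
                norm (b p + t - a r) \<noteq> norm (b p + t - a s)"
    and opt: "optimal_matching a b n m t \<pi>"
  shows "(\<not> (\<exists>k::nat. \<exists>i::nat \<Rightarrow> nat. k \<ge> 1 \<and> (\<forall>j<k. i j < m) \<and>
            (\<forall>j<k. norm (b (i j) + t - a (\<pi> (i j)))
                     > norm (b (i j) + t - a (\<pi> (i ((j + 1) mod k))))))) \<and>
         (\<forall>i<m. among_k_nearest a {..<n} (b i + t) m (\<pi> i)) \<and>
         (\<exists>i<m. is_nearest a {..<n} (b i + t) (\<pi> i)) \<and>
         (\<exists>\<sigma>. bij_betw \<sigma> {..<m} {..<m} \<and>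
           (\<forall>k<m. is_nearest a ({..<n} - \<pi> ` \<sigma> ` {..<k}) (b (\<sigma> k) + t) (\<pi> (\<sigma> k))) \<and>
           (\<forall>k<m. among_k_nearest a {..<n} (b (\<sigma> k) + t) (k + 1) (\<pi> (\<sigma> k))))"
proof -
  obtain \<sigma> where \<sigma>: "bij_betw \<sigma> {..<m} {..<m}"
    and greedy: "\<forall>k<m. is_nearest a ({..<n} - \<pi> ` \<sigma> ` {..<k}) (b (\<sigma> k) + t) (\<pi> (\<sigma> k))"
    and k_nearest: "\<forall>k<m. among_k_nearest a {..<n} (b (\<sigma> k) + t) (k + 1) (\<pi> (\<sigma> k))"
    using optimal_matching_greedy_permutation[OF opt] by blast
  have "\<forall>i<m. among_k_nearest a {..<n} (b i + t) m (\<pi> i)"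
  proof (intro allI impI)
    fix i assume "i < m"
    then obtain k where "k < m" "i = \<sigma> k"
      using \<sigma> by (metis bij_betw_imp_surj_on imageE lessThan_iff)
    then show "among_k_nearest a {..<n} (b i + t) m (\<pi> i)"
      using k_nearest among_k_nearest_mono[of a _ _ "k + 1" _ m] by simp
  qed
  moreover have "is_nearest a {..<n} (b (\<sigma> 0) + t) (\<pi> (\<sigma> 0))" "\<sigma> 0 < m"
    using greedy \<sigma> \<open>1 \<le> m\<close> by (auto simp: bij_betw_def)
  ultimately show ?thesis
    using optimal_matching_no_envy_cycle[OF opt] \<sigma> greedy k_nearest
    unfolding envies_def by blast
qed

end
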